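(* Let $N$ and $\tilde{N}$ be real symmetric $n\times n$ matrices such that $N$ is positive semidefinite, $I-N$ and $I-\tilde N$ are positive semidefinite, and $I-\tilde{N}\approx_{\epsilon}I-N$ for some $\epsilon\in[0,1]$. Then $I-\tilde{N}^2\approx_{\epsilon}I-N^2$.
   Context: For real symmetric $X,Y$ and $\epsilon\ge0$, $X\approx_\epsilon Y$ means $(1-\epsilon)v^TYv\le v^TXv\le(1+\epsilon)v^TYv$ for all $v\in\mathbb{R}^n$. *)

theory Defs
  imports "HOL-Analysis.Analysis"
begin

text \<open>Real n x n matrices are rendered as real^'n^'n (n = CARD('n)).\<close>

definition sym_mat :: "real^'n^'n \<Rightarrow> bool" where
  "sym_mat A \<longleftrightarrow> transpose A = A"

definition psd :: "real^'n^'n \<Rightarrow> bool" where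
  "psd A \<longleftrightarrow> (\<forall>v. 0 \<le> v \<bullet> (A *v v))"

definition spec_approx :: "real^'n^'n \<Rightarrow> real \<Rightarrow> real^'n^'n \<Rightarrow> bool" where
  "spec_approx X eps Y \<longleftrightarrow>
     (\<forall>v. (1 - eps) * (v \<bullet> (Y *v v)) \<le> v \<bullet> (X *v v) \<and>
          v \<bullet> (X *v v) \<le> (1 + eps) * (v \<bullet> (Y *v v)))"

end

theory Submission
  imports Defs
begin

text \<open>
  For symmetric \<open>M\<close> the form of \<open>I - M\<^sup>2\<close> is \<open>\<parallel>v\<parallel>\<^sup>2 - \<parallel>M v\<parallel>\<^sup>2\<close>, so one has to compare
  \<open>\<parallel>Nt v\<parallel>\<close> with \<open>\<parallel>N v\<parallel>\<close>.
  Upper bound: the hypothesis says \<open>|v\<cdot>(N - Nt)v| \<le> \<epsilon> v\<cdot>(I - N)v\<close>; polarizing at \<open>x = N v\<close>,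
  \<open>y = v\<close> and using \<open>(v - N v)\<cdot>N(v - N v) \<ge> 0\<close> bounds the cross term in
  \<open>\<parallel>Nt v\<parallel>\<^sup>2 = \<parallel>N v - (N - Nt)v\<parallel>\<^sup>2\<close> by \<open>\<epsilon>(\<parallel>v\<parallel>\<^sup>2 - \<parallel>N v\<parallel>\<^sup>2)\<close>.
  Lower bound: the numerical range of \<open>Nt - (1 - \<epsilon>)N\<close> lies in \<open>[-\<epsilon>, \<epsilon>]\<close>, so its operator norm
  is at most \<open>\<epsilon>\<close>; hence \<open>\<parallel>Nt v\<parallel> \<le> (1 - \<epsilon>)\<parallel>N v\<parallel> + \<epsilon>\<parallel>v\<parallel>\<close>, and convexity of \<open>t\<^sup>2\<close> gives
  \<open>\<parallel>Nt v\<parallel>\<^sup>2 \<le> (1 - \<epsilon>)\<parallel>N v\<parallel>\<^sup>2 + \<epsilon>\<parallel>v\<parallel>\<^sup>2\<close>.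
\<close>

lemma transpose_diff: "transpose (A - B) = transpose A - transpose (B :: 'a::ring_1^'n^'m)"
  by (simp add: transpose_def vec_eq_iff)

lemma sym_mat_diff: "sym_mat A \<Longrightarrow> sym_mat B \<Longrightarrow> sym_mat (A - B)"
  by (simp add: sym_mat_def transpose_diff)

lemma sym_mat_scaleR: "sym_mat A \<Longrightarrow> sym_mat (c *\<^sub>R A)"
  by (simp add: sym_mat_def transpose_scalar)

lemma sym_mat_inner_commute:
  assumes "sym_mat M"
  shows "x \<bullet> (M *v y) = (M *v x) \<bullet> y"
  by (metis assms dot_lmul_matrix sym_mat_def transpose_matrix_vector)

lemma sym_mat_inner_one_minus_square:
  assumes "sym_mat M"
  shows "v \<bullet> ((mat 1 - M ** M) *v v) = (norm v)\<^sup>2 - (norm (M *v v))\<^sup>2"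
  using sym_mat_inner_commute[OF assms, of v "M *v v"]
  by (simp add: matrix_vector_mult_diff_rdistrib inner_diff_right power2_norm_eq_inner
      matrix_vector_mul_assoc[symmetric])

lemma spec_approx_iff_abs_inner_diff:
  "spec_approx X eps Y \<longleftrightarrow> (\<forall>v. \<bar>v \<bullet> ((X - Y) *v v)\<bar> \<le> eps * (v \<bullet> (Y *v v)))"
  unfolding spec_approx_def
  by (auto simp: abs_le_iff matrix_vector_mult_diff_rdistrib inner_diff_right algebra_simps)

lemma sym_mat_polarization_bound:
  fixes G P :: "real^'n^'n"
  assumes "sym_mat G" and bound: "\<And>v. \<bar>v \<bullet> (G *v v)\<bar> \<le> e * (v \<bullet> (P *v v))"
  shows "2 * (x \<bullet> (G *v y)) \<le> e * (x \<bullet> (P *v x) + y \<bullet> (P *v y))"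
proof -
  have "4 * (x \<bullet> (G *v y)) = (x + y) \<bullet> (G *v (x + y)) - (x - y) \<bullet> (G *v (x - y))"
    using sym_mat_inner_commute[OF assms(1), of y x] by (simp add: algebra_simps inner_commute)
  also have "\<dots> \<le> e * ((x + y) \<bullet> (P *v (x + y)) + (x - y) \<bullet> (P *v (x - y)))"
    using abs_le_D1[OF bound[of "x + y"]] abs_le_D2[OF bound[of "x - y"]]
    unfolding distrib_left by linarith
  also have "(x + y) \<bullet> (P *v (x + y)) + (x - y) \<bullet> (P *v (x - y))
      = 2 * (x \<bullet> (P *v x) + y \<bullet> (P *v y))"
    by (simp add: algebra_simps)
  finally show ?thesis by (simp add: algebra_simps)
qed

lemma sym_mat_norm_bound:
  fixes G :: "real^'n^'n"
  assumes "sym_mat G" and "0 \<le> e" and bound: "\<And>v. \<bar>v \<bullet> (G *v v)\<bar> \<le> e * (norm v)\<^sup>2"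
  shows "norm (G *v v) \<le> e * norm v"
proof -
  have "\<bar>v \<bullet> (G *v v)\<bar> \<le> e * (v \<bullet> (mat 1 *v v))" for v
    by (metis bound matrix_vector_mul_lid power2_norm_eq_inner)
  from sym_mat_polarization_bound[OF assms(1) this]
  have polar: "2 * (x \<bullet> (G *v y)) \<le> e * ((norm x)\<^sup>2 + (norm y)\<^sup>2)" for x y
    by (metis matrix_vector_mul_lid power2_norm_eq_inner)
  show ?thesis
  proof (cases "e = 0")
    case True
    then have "(G *v v) \<bullet> (G *v v) \<le> 0" using polar[of "G *v v" v] by simp
    then have "G *v v = 0" by (metis inner_gt_zero_iff not_le)
    then show ?thesis using True by simp
  next
    case False
    with \<open>0 \<le> e\<close> have "0 < e" by simp
    have "2 * e * (norm (G *v v))\<^sup>2 \<le> e * ((norm (G *v v))\<^sup>2 + (norm (e *\<^sub>R v))\<^sup>2)"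
      using polar[of "G *v v" "e *\<^sub>R v"]
      by (metis matrix_vector_mult_scaleR inner_scaleR_right mult.assoc power2_norm_eq_inner)
    then have "e * (norm (G *v v))\<^sup>2 \<le> e * (e * norm v)\<^sup>2"
      using \<open>0 \<le> e\<close> by (simp add: power_mult_distrib algebra_simps)
    then have "(norm (G *v v))\<^sup>2 \<le> (e * norm v)\<^sup>2"
      using \<open>0 < e\<close> by simp
    then show ?thesis using \<open>0 \<le> e\<close> by (metis power2_le_imp_le mult_nonneg_nonneg norm_ge_zero)
  qed
qed

lemma spec_approx_square_upper:
  fixes N Nt :: "real^'n^'n"
  assumes "sym_mat N" "sym_mat Nt" "psd N" "0 \<le> eps"
    and approx: "spec_approx (mat 1 - Nt) eps (mat 1 - N)"
  shows "(norm v)\<^sup>2 - (norm (Nt *v v))\<^sup>2 \<le> (1 + eps) * ((norm v)\<^sup>2 - (norm (N *v v))\<^sup>2)"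
proof -
  define G where "G = N - Nt"
  define P :: "real^'n^'n" where "P = mat 1 - N"
  have "sym_mat G" unfolding G_def using assms(1,2) by (rule sym_mat_diff)
  have "mat 1 - Nt - P = G" by (simp add: G_def P_def)
  with approx have "\<bar>x \<bullet> (G *v x)\<bar> \<le> eps * (x \<bullet> (P *v x))" for x
    by (simp add: spec_approx_iff_abs_inner_diff P_def)
  from sym_mat_polarization_bound[OF \<open>sym_mat G\<close> this]
  have polar: "2 * ((N *v v) \<bullet> (G *v v)) \<le> eps * ((N *v v) \<bullet> (P *v (N *v v)) + v \<bullet> (P *v v))" .
  have "0 \<le> (v - N *v v) \<bullet> (N *v (v - N *v v))"
    using \<open>psd N\<close> by (simp add: psd_def)
  then have "(N *v v) \<bullet> (P *v (N *v v)) + v \<bullet> (P *v v) \<le> (norm v)\<^sup>2 - (norm (N *v v))\<^sup>2"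
    using sym_mat_inner_commute[OF assms(1), of v "N *v v"]
    by (simp add: P_def algebra_simps power2_norm_eq_inner)
  with polar \<open>0 \<le> eps\<close> have cross: "2 * ((N *v v) \<bullet> (G *v v)) \<le> eps * ((norm v)\<^sup>2 - (norm (N *v v))\<^sup>2)"
    by (meson mult_left_mono order_trans)
  have "Nt *v v = N *v v - G *v v"
    by (simp add: G_def matrix_vector_mult_diff_rdistrib)
  then have "(norm (Nt *v v))\<^sup>2 = (norm (N *v v))\<^sup>2 - 2 * ((N *v v) \<bullet> (G *v v)) + (norm (G *v v))\<^sup>2"
    by (simp only: power2_norm_eq_inner) (simp add: algebra_simps inner_commute)
  with cross show ?thesis
    using zero_le_power2[of "norm (G *v v)"] unfolding right_diff_distrib distrib_right by linarith
qed

lemma spec_approx_square_lower: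
  fixes N Nt :: "real^'n^'n"
  assumes "sym_mat N" "sym_mat Nt" "psd N" "0 \<le> eps" "eps \<le> 1"
    and approx: "spec_approx (mat 1 - Nt) eps (mat 1 - N)"
  shows "(1 - eps) * ((norm v)\<^sup>2 - (norm (N *v v))\<^sup>2) \<le> (norm v)\<^sup>2 - (norm (Nt *v v))\<^sup>2"
proof -
  define G where "G = Nt - (1 - eps) *\<^sub>R N"
  have "sym_mat G" unfolding G_def using assms(1,2) by (simp add: sym_mat_diff sym_mat_scaleR)
  have "\<bar>x \<bullet> (G *v x)\<bar> \<le> eps * (norm x)\<^sup>2" for x
  proof -
    have "mat 1 - Nt - (mat 1 - N) = N - Nt" by simp
    with approx have "\<bar>x \<bullet> ((N - Nt) *v x)\<bar> \<le> eps * (x \<bullet> x - x \<bullet> (N *v x))"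
      by (simp add: spec_approx_iff_abs_inner_diff matrix_vector_mult_diff_rdistrib inner_diff_right)
    moreover have "x \<bullet> (G *v x) = eps * (x \<bullet> (N *v x)) - x \<bullet> ((N - Nt) *v x)"
      by (simp add: G_def algebra_simps scaleR_matrix_vector_assoc[symmetric])
    moreover have "0 \<le> eps * (x \<bullet> (N *v x))"
      using \<open>psd N\<close> \<open>0 \<le> eps\<close> by (simp add: psd_def)
    ultimately show ?thesis
      by (simp add: abs_le_iff power2_norm_eq_inner right_diff_distrib)
  qed
  with \<open>sym_mat G\<close> \<open>0 \<le> eps\<close> have "norm (G *v v) \<le> eps * norm v"
    by (rule sym_mat_norm_bound)
  have "Nt *v v = (1 - eps) *\<^sub>R (N *v v) + G *v v"
    by (simp add: G_def matrix_vector_mult_diff_rdistrib scaleR_matrix_vector_assoc)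
  then have "norm (Nt *v v) \<le> (1 - eps) * norm (N *v v) + eps * norm v"
    using \<open>norm (G *v v) \<le> eps * norm v\<close> \<open>eps \<le> 1\<close>
    by (metis add_left_mono norm_scaleR norm_triangle_le abs_of_nonneg diff_ge_0_iff_ge)
  then have "(norm (Nt *v v))\<^sup>2 \<le> ((1 - eps) * norm (N *v v) + eps * norm v)\<^sup>2"
    by (simp add: power_mono)
  also have "\<dots> \<le> (1 - eps) * (norm (N *v v))\<^sup>2 + eps * (norm v)\<^sup>2"
  proof -
    have "0 \<le> eps * (1 - eps) * (norm (N *v v) - norm v)\<^sup>2"
      using assms(4,5) by simp
    then show ?thesis by (simp add: power2_eq_square algebra_simps)
  qed
  finally show ?thesis by (simp add: algebra_simps)
qed

theorem mainTheorem7: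
  fixes N Nt :: "real^'n^'n" and eps :: real
  assumes "sym_mat N" and "sym_mat Nt"
    and "psd N"
    and "psd (mat 1 - N)" and "psd (mat 1 - Nt)"
    and "0 \<le> eps" and "eps \<le> 1"
    and "spec_approx (mat 1 - Nt) eps (mat 1 - N)"
  shows "spec_approx (mat 1 - Nt ** Nt) eps (mat 1 - N ** N)"
  unfolding spec_approx_def sym_mat_inner_one_minus_square[OF assms(1)]
    sym_mat_inner_one_minus_square[OF assms(2)]
  using spec_approx_square_lower[OF assms(1-3,6-8)] spec_approx_square_upper[OF assms(1-3,6,8)]
  by blast

end
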